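(* Let $I\ge1$, $\varphi\ge0$, $\psi\in(0,\infty)^I$, $\boldsymbol\lambda=(\boldsymbol\lambda^{ji})\in(0,\infty)^{I\times I}$ with $\psi^i+\sum_j\boldsymbol\lambda^{ji}=1$ for all $i$. Let $\overline\delta\ge0$, $\overline\tau\in\mathbb R_+^I$ with $\overline\delta\max_i\overline\tau^i<1$, $\overline\zeta\in\mathbb R_+^{I\times I}$, $\overline\kappa\in\mathbb R_+^I$, and define $$\Psi^i:=\psi^i\frac{1-\overline\tau^i\overline\delta}{1+\overline\kappa^i\overline\delta},\qquad \Lambda^{ji}:=\boldsymbol\lambda^{ji}\frac{1-\overline\tau^i\overline\delta}{1+\overline\zeta^{ji}\overline\delta}\,\frac{1+\overline\kappa^j\overline\delta}{1+\overline\kappa^i\overline\delta}.$$ Let $A\in(0,\infty)^I$ and consider the system, for $(C,Y)\in(0,\infty)^I\times(0,\infty)^I$ and all $i$, $$Y^i=C^i+\sum_{j}\Lambda^{ij}\frac{C^i}{C^j}Y^j,\qquad Y^i=A^i\Big[\Psi^i\frac{Y^i}{C^i}\Big]^{\frac{\psi^i}{1+\varphi}}\prod_{j}\Big[\Lambda^{ji}C^j\frac{Y^i}{C^i}\Big]^{\boldsymbol\lambda^{ji}}.$$ Assume that the matrix $(\delta_{ij}-\Lambda^{ij})_{i,j}$ is nonsingular and that the unique vector $\mathfrak e\in\mathbb R^I$ with $\mathfrak e^i=1+\sum_j\Lambda^{ij}\mathfrak e^j$ for all $i$ has positive entries, and that the matrix $N:=(\delta_{ij}-\boldsymbol\lambda^{ji})_{i,j}$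 is nonsingular. Then the system has a unique solution $(C,Y)\in(0,\infty)^I\times(0,\infty)^I$; it satisfies $Y^i/C^i=\mathfrak e^i$ for all $i$, $$(\log C^i)_{i}=N^{-1}\big(\log A^i+\mathfrak v^i\big)_{i},\qquad \log Y^i=\log C^i+\log\mathfrak e^i,$$ where $\mathfrak v^i:=-\frac{\varphi\psi^i}{1+\varphi}\log\mathfrak e^i+\frac{\psi^i}{1+\varphi}\log\Psi^i+\sum_j\boldsymbol\lambda^{ji}\log\Lambda^{ji}$.
   Context: $\delta_{ij}$ is the Kronecker delta. The system is the market-equilibrium system of a multisectoral economy with logarithmic utility of consumption; $C^i$ is household consumption of good $i$, $Y^i$ output of sector $i$, $A^i$ total factor productivity of sector $i$. *)

theory Defs
  imports "HOL-Analysis.Analysis"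
begin

text \<open>Indices range over a finite type 'n (so I = CARD('n) >= 1).
  Vectors are real^'n, matrices real^'n^'n with M $ i $ j the (i,j) entry.\<close>

definition PsiC :: "(real^'n) \<Rightarrow> real \<Rightarrow> real^'n \<Rightarrow> real^'n \<Rightarrow> 'n \<Rightarrow> real" where
  "PsiC psi dbar taubar kappabar i =
     psi $ i * (1 - taubar $ i * dbar) / (1 + kappabar $ i * dbar)"

text \<open>LambdaC lam ... j i is the paper's Lambda^{ji}; lam $ j $ i is lambda^{ji}.\<close>
definition LambdaC :: "(real^'n^'n) \<Rightarrow> real \<Rightarrow> real^'n \<Rightarrow> real^'n^'n \<Rightarrow> real^'n \<Rightarrow> 'n \<Rightarrow> 'n \<Rightarrow> real" where
  "LambdaC lam dbar taubar zetabar kappabar j i =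
     lam $ j $ i * (1 - taubar $ i * dbar) / (1 + zetabar $ j $ i * dbar)
       * ((1 + kappabar $ j * dbar) / (1 + kappabar $ i * dbar))"

end

theory Submission
  imports Defs
begin

text \<open>Dividing the market-clearing equation by \<open>C\<^sup>i\<close> turns it into the linear system
  \<open>(I - \<Lambda>) (Y/C) = 1\<close> for the output/consumption ratios, so \<open>Y/C = \<frak>e\<close> is forced.
  Substituting \<open>Y = C \<frak>e\<close> into the production equation and taking logarithms, the shares
  \<open>\<psi>\<^sup>i + \<Sum>\<^sub>j \<lambda>\<^sup>j\<^sup>i = 1\<close> collect all powers of \<open>\<frak>e\<^sup>i\<close> into one term, and what remains is the
  linear system \<open>N log C = log A + \<frak>v\<close>. Invertibility of \<open>N\<close> gives a unique \<open>log C\<close>,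
  and exponentiating it produces the solution.\<close>

lemma matrix_inv_mult:
  fixes A :: "'a::semiring_1^'n^'n"
  assumes "invertible A"
  shows "A ** matrix_inv A = mat 1" and "matrix_inv A ** A = mat 1"
  using someI_ex[OF assms[unfolded invertible_def]] unfolding matrix_inv_def by auto

lemma invertible_mult_vec_eq_iff:
  fixes A :: "'a::comm_semiring_1^'n^'n"
  assumes "invertible A"
  shows "A *v x = b \<longleftrightarrow> x = matrix_inv A *v b"
  by (metis assms matrix_inv_mult matrix_vector_mul_assoc matrix_vector_mul_lid)

lemma identity_minus_matrix_vector_nth:
  fixes x :: "'a::comm_ring_1^'n"
  shows "((\<chi> i j. (if i = j then 1 else 0) - L i j) *v x) $ i = x $ i - (\<Sum>j\<in>UNIV. L i j * x $ j)"
proof -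
  have "((\<chi> i j. (if i = j then 1 else 0) - L i j) *v x) $ i
      = (\<Sum>j\<in>UNIV. (if i = j then x $ j else 0) - L i j * x $ j)"
    unfolding matrix_vector_mult_def by (auto intro!: sum.cong simp: left_diff_distrib)
  then show ?thesis by (simp add: sum_subtractf)
qed

lemma ln_production_function:
  fixes c Lam l :: "'n::finite \<Rightarrow> real"
  assumes "A > 0" "Psi > 0" "e > 0" "\<forall>j. Lam j > 0" "\<forall>j. c j > 0"
  shows "ln (A * (Psi * e) powr a * (\<Prod>j\<in>UNIV. (Lam j * c j * e) powr l j))
       = ln A + a * (ln Psi + ln e) + (\<Sum>j\<in>UNIV. l j * (ln (Lam j) + ln (c j) + ln e))"
proof -
  define f where "f j = Lam j * c j * e" for j
  have f_ne: "f j \<noteq> 0" for j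
    using assms unfolding f_def by (metis mult_pos_pos less_irrefl)
  have ln_f: "ln (f j) = ln (Lam j) + ln (c j) + ln e" for j
    using assms unfolding f_def by (simp add: ln_mult_pos)
  have "ln (\<Prod>j\<in>UNIV. f j powr l j) = (\<Sum>j\<in>UNIV. l j * ln (f j))"
    using f_ne by (simp add: ln_prod)
  moreover have "(\<Prod>j\<in>UNIV. f j powr l j) > 0"
    using f_ne by (simp add: prod_pos)
  ultimately show ?thesis
    using assms by (simp add: ln_mult_pos ln_f flip: f_def)
qed

lemma production_eq_iff_log_linear:
  fixes c Lam l :: "'n::finite \<Rightarrow> real"
  assumes "A > 0" "Psi > 0" "e > 0" "\<forall>j. Lam j > 0" "\<forall>j. c j > 0"
    and shares: "psi + (\<Sum>j\<in>UNIV. l j) = 1" and "1 + varphi \<noteq> 0"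
  shows "c i * e = A * (Psi * e) powr (psi / (1 + varphi))
            * (\<Prod>j\<in>UNIV. (Lam j * c j * e) powr l j)
    \<longleftrightarrow> ln (c i) - (\<Sum>j\<in>UNIV. l j * ln (c j))
        = ln A - varphi * psi / (1 + varphi) * ln e + psi / (1 + varphi) * ln Psi
            + (\<Sum>j\<in>UNIV. l j * ln (Lam j))"
proof -
  define a where "a = psi / (1 + varphi)"
  define R where "R = A * (Psi * e) powr a * (\<Prod>j\<in>UNIV. (Lam j * c j * e) powr l j)"
  let ?SL = "\<Sum>j\<in>UNIV. l j * ln (Lam j)" and ?Sc = "\<Sum>j\<in>UNIV. l j * ln (c j)"
  have "Lam j * c j * e \<noteq> 0" for j
    using assms by (metis mult_pos_pos less_irrefl)
  then have "R > 0"
    using assms unfolding R_def by (intro mult_pos_pos prod_pos) auto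
  moreover have "c i * e > 0"
    using assms by simp
  ultimately have "c i * e = R \<longleftrightarrow> ln (c i) + ln e = ln R"
    using assms by (simp add: ln_mult_pos flip: ln_inj_iff)
  moreover have "(\<Sum>j\<in>UNIV. l j * (ln (Lam j) + ln (c j) + ln e)) = ?SL + ?Sc + (1 - psi) * ln e"
    using shares by (simp add: distrib_left sum.distrib flip: sum_distrib_right)
  then have "ln R = ln A + a * (ln Psi + ln e) + ?SL + ?Sc + (1 - psi) * ln e"
    using ln_production_function[OF assms(1-5)] unfolding R_def by simp
  moreover have "varphi * psi / (1 + varphi) = psi - a"
    using \<open>1 + varphi \<noteq> 0\<close> unfolding a_def by (simp add: field_simps)
  ultimately show ?thesis
    unfolding a_def[symmetric] R_def[symmetric] by (simp only: distrib_left left_diff_distrib) argo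
qed

lemma market_clearing_iff:
  fixes C Y :: "real^'n"
  assumes "\<forall>i. C $ i > 0"
  shows "(\<forall>i. Y $ i = C $ i + (\<Sum>j\<in>UNIV. L i j * (C $ i / C $ j) * Y $ j)) \<longleftrightarrow>
         (\<chi> i j. (if i = j then 1 else 0) - L i j) *v (\<chi> i. Y $ i / C $ i) = (\<chi> i. 1)"
proof -
  have "Y $ i = C $ i + (\<Sum>j\<in>UNIV. L i j * (C $ i / C $ j) * Y $ j) \<longleftrightarrow>
        Y $ i / C $ i - (\<Sum>j\<in>UNIV. L i j * (Y $ j / C $ j)) = 1" for i
  proof -
    have "(\<Sum>j\<in>UNIV. L i j * (C $ i / C $ j) * Y $ j) = C $ i * (\<Sum>j\<in>UNIV. L i j * (Y $ j / C $ j))"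
      unfolding sum_distrib_left by (intro sum.cong) simp_all
    moreover have "C $ i > 0"
      using assms by blast
    ultimately show ?thesis
      by (simp add: field_simps) (rule eq_commute)
  qed
  then show ?thesis
    by (simp add: vec_eq_iff identity_minus_matrix_vector_nth)
qed

definition equilibrium ::
    "real \<Rightarrow> real^'n \<Rightarrow> real^'n^'n \<Rightarrow> real^'n \<Rightarrow> ('n \<Rightarrow> real) \<Rightarrow> ('n \<Rightarrow> 'n \<Rightarrow> real)
      \<Rightarrow> real^'n \<Rightarrow> real^'n \<Rightarrow> bool" where
  "equilibrium varphi psi lam A Psi Lam C Y \<longleftrightarrow>
     (\<forall>i. C $ i > 0 \<and> Y $ i > 0) \<and>
     (\<forall>i. Y $ i = C $ i + (\<Sum>j\<in>UNIV. Lam i j * (C $ i / C $ j) * Y $ j)) \<and>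
     (\<forall>i. Y $ i = A $ i * (Psi i * (Y $ i / C $ i)) powr (psi $ i / (1 + varphi))
           * (\<Prod>j\<in>UNIV. (Lam j i * C $ j * (Y $ i / C $ i)) powr (lam $ j $ i)))"

lemma equilibrium_iff_log_linear:
  fixes varphi :: real and psi A e :: "real^'n" and lam :: "real^'n^'n"
    and Psi :: "'n \<Rightarrow> real" and Lam :: "'n \<Rightarrow> 'n \<Rightarrow> real"
  defines "N \<equiv> (\<chi> i j. (if i = j then 1 else 0) - lam $ j $ i :: real^'n^'n)"
    and "v \<equiv> (\<chi> i. - (varphi * psi $ i / (1 + varphi)) * ln (e $ i)
                   + (psi $ i / (1 + varphi)) * ln (Psi i)
                   + (\<Sum>j\<in>UNIV. lam $ j $ i * ln (Lam j i)))"
  assumes varphi: "1 + varphi \<noteq> 0"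
    and shares: "\<forall>i. psi $ i + (\<Sum>j\<in>UNIV. lam $ j $ i) = 1"
    and A_pos: "\<forall>i. A $ i > 0"
    and Psi_pos: "\<forall>i. Psi i > 0"
    and Lam_pos: "\<forall>i j. Lam i j > 0"
    and M_inv: "invertible (\<chi> i j. (if i = j then 1 else 0) - Lam i j)"
    and e: "(\<chi> i j. (if i = j then 1 else 0) - Lam i j) *v e = (\<chi> i. 1)"
    and e_pos: "\<forall>i. e $ i > 0"
  shows "equilibrium varphi psi lam A Psi Lam C Y \<longleftrightarrow>
    (\<forall>i. C $ i > 0) \<and> Y = (\<chi> i. C $ i * e $ i) \<and> N *v (\<chi> i. ln (C $ i)) = (\<chi> i. ln (A $ i) + v $ i)"
proof (cases "\<forall>i. C $ i > 0")
  case False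
  then show ?thesis
    unfolding equilibrium_def by blast
next
  case C_pos: True
  have ratios: "(\<forall>i. Y $ i = C $ i + (\<Sum>j\<in>UNIV. Lam i j * (C $ i / C $ j) * Y $ j))
      \<longleftrightarrow> Y = (\<chi> i. C $ i * e $ i)"
  proof -
    have "Y $ i / C $ i = e $ i \<longleftrightarrow> Y $ i = C $ i * e $ i" for i
      using C_pos[rule_format, of i] by (simp add: divide_eq_eq mult.commute)
    then have "(\<chi> i. Y $ i / C $ i) = e \<longleftrightarrow> Y = (\<chi> i. C $ i * e $ i)"
      by (simp add: vec_eq_iff)
    then show ?thesis
      unfolding market_clearing_iff[OF C_pos] invertible_mult_vec_eq_iff[OF M_inv]
        e[unfolded invertible_mult_vec_eq_iff[OF M_inv], symmetric] .
  qed
  have production: "(\<forall>i. Y $ i = A $ i * (Psi i * (Y $ i / C $ i)) powr (psi $ i / (1 + varphi))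
           * (\<Prod>j\<in>UNIV. (Lam j i * C $ j * (Y $ i / C $ i)) powr (lam $ j $ i)))
      \<longleftrightarrow> N *v (\<chi> i. ln (C $ i)) = (\<chi> i. ln (A $ i) + v $ i)"
    if Y: "Y = (\<chi> i. C $ i * e $ i)"
  proof -
    have "Y $ i = A $ i * (Psi i * (Y $ i / C $ i)) powr (psi $ i / (1 + varphi))
           * (\<Prod>j\<in>UNIV. (Lam j i * C $ j * (Y $ i / C $ i)) powr (lam $ j $ i))
      \<longleftrightarrow> (N *v (\<chi> i. ln (C $ i))) $ i = ln (A $ i) + v $ i" for i
    proof -
      have ratio: "Y $ i / C $ i = e $ i" and Yi: "Y $ i = C $ i * e $ i"
        using C_pos[rule_format, of i] Y by simp_all
      have row: "(N *v (\<chi> i. ln (C $ i))) $ i = ln (C $ i) - (\<Sum>j\<in>UNIV. lam $ j $ i * ln (C $ j))"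
        unfolding N_def using identity_minus_matrix_vector_nth[of "\<lambda>i j. lam $ j $ i"] by simp
      have rhs: "ln (A $ i) + v $ i = ln (A $ i) - varphi * psi $ i / (1 + varphi) * ln (e $ i)
          + psi $ i / (1 + varphi) * ln (Psi i) + (\<Sum>j\<in>UNIV. lam $ j $ i * ln (Lam j i))"
        unfolding v_def by simp
      show ?thesis
        unfolding ratio unfolding Yi row rhs
        by (rule production_eq_iff_log_linear) (use A_pos Psi_pos e_pos Lam_pos C_pos shares varphi in auto)
    qed
    then show ?thesis
      by (simp add: vec_eq_iff)
  qed
  have "Y = (\<chi> i. C $ i * e $ i) \<Longrightarrow> \<forall>i. Y $ i > 0"
    using C_pos e_pos by simp
  then show ?thesis
    using C_pos ratios production unfolding equilibrium_def by blast
qed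

lemma equilibrium_exists_unique:
  fixes varphi :: real and psi A e :: "real^'n" and lam :: "real^'n^'n"
    and Psi :: "'n \<Rightarrow> real" and Lam :: "'n \<Rightarrow> 'n \<Rightarrow> real"
  defines "N \<equiv> (\<chi> i j. (if i = j then 1 else 0) - lam $ j $ i :: real^'n^'n)"
    and "v \<equiv> (\<chi> i. - (varphi * psi $ i / (1 + varphi)) * ln (e $ i)
                   + (psi $ i / (1 + varphi)) * ln (Psi i)
                   + (\<Sum>j\<in>UNIV. lam $ j $ i * ln (Lam j i)))"
  assumes varphi: "1 + varphi \<noteq> 0"
    and shares: "\<forall>i. psi $ i + (\<Sum>j\<in>UNIV. lam $ j $ i) = 1"
    and A_pos: "\<forall>i. A $ i > 0"
    and Psi_pos: "\<forall>i. Psi i > 0"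
    and Lam_pos: "\<forall>i j. Lam i j > 0"
    and M_inv: "invertible (\<chi> i j. (if i = j then 1 else 0) - Lam i j)"
    and e: "(\<chi> i j. (if i = j then 1 else 0) - Lam i j) *v e = (\<chi> i. 1)"
    and e_pos: "\<forall>i. e $ i > 0"
    and N_inv: "invertible N"
  shows "(\<exists>!CY. equilibrium varphi psi lam A Psi Lam (fst CY) (snd CY)) \<and>
    (\<forall>C Y. equilibrium varphi psi lam A Psi Lam C Y \<longrightarrow>
       (\<forall>i. Y $ i / C $ i = e $ i) \<and>
       (\<chi> i. ln (C $ i)) = matrix_inv N *v (\<chi> i. ln (A $ i) + v $ i) \<and>
       (\<forall>i. ln (Y $ i) = ln (C $ i) + ln (e $ i)))"
proof -
  define b where "b = (\<chi> i. ln (A $ i) + v $ i)"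
  have char: "equilibrium varphi psi lam A Psi Lam C Y \<longleftrightarrow>
      (\<forall>i. C $ i > 0) \<and> Y = (\<chi> i. C $ i * e $ i) \<and> (\<chi> i. ln (C $ i)) = matrix_inv N *v b" for C Y
    unfolding b_def invertible_mult_vec_eq_iff[OF N_inv, symmetric] unfolding N_def v_def
    by (rule equilibrium_iff_log_linear[OF varphi shares A_pos Psi_pos Lam_pos M_inv e e_pos])
  define C0 where "C0 = (\<chi> i. exp ((matrix_inv N *v b) $ i))"
  define Y0 where "Y0 = (\<chi> i. C0 $ i * e $ i)"
  have solution: "equilibrium varphi psi lam A Psi Lam C0 Y0"
    unfolding char C0_def Y0_def by (simp add: vec_eq_iff)
  have unique: "C = C0 \<and> Y = Y0" if "equilibrium varphi psi lam A Psi Lam C Y" for C Y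
  proof -
    have C_pos: "\<forall>i. C $ i > 0" and Y: "Y = (\<chi> i. C $ i * e $ i)"
      and lnC: "(\<chi> i. ln (C $ i)) = matrix_inv N *v b"
      using that char by blast+
    have "C $ i = C0 $ i" for i
    proof -
      have "ln (C $ i) = (matrix_inv N *v b) $ i"
        using arg_cong[OF lnC, of "\<lambda>x. x $ i"] by simp
      then have "C0 $ i = exp (ln (C $ i))"
        unfolding C0_def by simp
      then show ?thesis
        using C_pos by simp
    qed
    then show ?thesis
      using Y unfolding Y0_def by (simp add: vec_eq_iff)
  qed
  have "\<exists>!CY. equilibrium varphi psi lam A Psi Lam (fst CY) (snd CY)"
  proof (rule ex1I[of _ "(C0, Y0)"])
    fix CY
    assume "equilibrium varphi psi lam A Psi Lam (fst CY) (snd CY)"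
    then show "CY = (C0, Y0)"
      using unique by (simp add: prod_eq_iff)
  qed (simp add: solution)
  moreover have "Y $ i / C $ i = e $ i \<and> ln (Y $ i) = ln (C $ i) + ln (e $ i)"
    if "equilibrium varphi psi lam A Psi Lam C Y" for C Y i
  proof -
    have "C $ i > 0" "e $ i > 0" "Y $ i = C $ i * e $ i"
      using that e_pos char by auto
    then show ?thesis
      by (simp add: ln_mult_pos)
  qed
  ultimately show ?thesis
    using char unfolding b_def by blast
qed

lemma PsiC_pos:
  assumes "psi $ i > 0" "taubar $ i * dbar < 1" "kappabar $ i \<ge> 0" "dbar \<ge> 0"
  shows "PsiC psi dbar taubar kappabar i > 0"
  using assms unfolding PsiC_def by (simp add: add_pos_nonneg)

lemma LambdaC_pos:
  assumes "lam $ j $ i > 0" "taubar $ i * dbar < 1"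
    and "zetabar $ j $ i \<ge> 0" "kappabar $ i \<ge> 0" "kappabar $ j \<ge> 0" "dbar \<ge> 0"
  shows "LambdaC lam dbar taubar zetabar kappabar j i > 0"
  using assms unfolding LambdaC_def by (simp add: add_pos_nonneg)

theorem mainTheorem5:
  fixes varphi dbar :: real
    and psi taubar kappabar A :: "real^'n"
    and lam zetabar :: "real^'n^'n"
  assumes varphi: "varphi \<ge> 0"
    and psi_pos: "\<forall>i. psi $ i > 0"
    and lam_pos: "\<forall>i j. lam $ j $ i > 0"
    and sum_one: "\<forall>i. psi $ i + (\<Sum>j\<in>UNIV. lam $ j $ i) = 1"
    and dbar: "dbar \<ge> 0"
    and taubar: "\<forall>i. taubar $ i \<ge> 0"
    and dtau: "dbar * (MAX i\<in>UNIV. taubar $ i) < 1"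
    and zetabar: "\<forall>i j. zetabar $ j $ i \<ge> 0"
    and kappabar: "\<forall>i. kappabar $ i \<ge> 0"
    and A_pos: "\<forall>i. A $ i > 0"
    and M_inv: "invertible (\<chi> i j. (if i = j then 1 else 0)
                   - LambdaC lam dbar taubar zetabar kappabar i j)"
    and e_pos: "\<forall>i. (matrix_inv (\<chi> i j. (if i = j then 1 else 0)
                   - LambdaC lam dbar taubar zetabar kappabar i j) *v (\<chi> i. 1)) $ i > 0"
    and N_inv: "invertible (\<chi> i j. (if i = j then 1 else 0) - lam $ j $ i)"
  shows
    "let Psi = PsiC psi dbar taubar kappabar;
         Lam = LambdaC lam dbar taubar zetabar kappabar;
         e = matrix_inv (\<chi> i j. (if i = j then 1 else 0) - Lam i j) *v (\<chi> i. 1);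
         N = (\<chi> i j. (if i = j then 1 else 0) - lam $ j $ i :: real^'n^'n);
         v = (\<chi> i. - (varphi * psi $ i / (1 + varphi)) * ln (e $ i)
                   + (psi $ i / (1 + varphi)) * ln (Psi i)
                   + (\<Sum>j\<in>UNIV. lam $ j $ i * ln (Lam j i)));
         sys = (\<lambda>(C::real^'n) (Y::real^'n).
                  (\<forall>i. C $ i > 0 \<and> Y $ i > 0) \<and>
                  (\<forall>i. Y $ i = C $ i + (\<Sum>j\<in>UNIV. Lam i j * (C $ i / C $ j) * Y $ j)) \<and>
                  (\<forall>i. Y $ i = A $ i * (Psi i * (Y $ i / C $ i)) powr (psi $ i / (1 + varphi))
                        * (\<Prod>j\<in>UNIV. (Lam j i * C $ j * (Y $ i / C $ i)) powr (lam $ j $ i))))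
     in (\<exists>!CY. sys (fst CY) (snd CY)) \<and>
        (\<forall>C Y. sys C Y \<longrightarrow>
           (\<forall>i. Y $ i / C $ i = e $ i) \<and>
           (\<chi> i. ln (C $ i)) = matrix_inv N *v (\<chi> i. ln (A $ i) + v $ i) \<and>
           (\<forall>i. ln (Y $ i) = ln (C $ i) + ln (e $ i)))"
proof -
  have taubar_dbar: "taubar $ i * dbar < 1" for i
  proof -
    have "dbar * taubar $ i \<le> dbar * (MAX i\<in>UNIV. taubar $ i)"
      using dbar by (intro mult_left_mono) simp_all
    then show ?thesis
      using dtau by (simp add: mult.commute)
  qed
  have "\<forall>i. PsiC psi dbar taubar kappabar i > 0"
    using PsiC_pos psi_pos taubar_dbar kappabar dbar by blast
  moreover have "\<forall>j i. LambdaC lam dbar taubar zetabar kappabar j i > 0"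
    using LambdaC_pos lam_pos taubar_dbar zetabar kappabar dbar by blast
  moreover have "(\<chi> i j. (if i = j then 1 else 0) - LambdaC lam dbar taubar zetabar kappabar i j)
      *v (matrix_inv (\<chi> i j. (if i = j then 1 else 0) - LambdaC lam dbar taubar zetabar kappabar i j)
      *v (\<chi> i. 1)) = (\<chi> i. 1)"
    using invertible_mult_vec_eq_iff[OF M_inv] by blast
  moreover have "1 + varphi \<noteq> 0"
    using varphi by simp
  ultimately show ?thesis
    unfolding Let_def equilibrium_def[symmetric]
    using equilibrium_exists_unique[OF _ sum_one A_pos _ _ M_inv _ e_pos N_inv] by blast
qed

end
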